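(* Let $0<s\le t$ be integers. Then $S_{s,t}=\mathbb{F}_q[x,y]_{s+t}\setminus\mathrm{Im}\,\Phi_{s,t}$.
   Context: $\mathbb{F}_q[x]_{\le s}$ is the set of polynomials in $\mathbb{F}_q[x]$ of degree at most $s$; $\mathbb{F}_q[x,y]_s$ is the space of homogeneous polynomials of degree $s$ in $x,y$ together with $0$. For $p\in\mathbb{F}_q[x,y]_s$, $p_x(x)=p(x,1)$ is its dehomogenization. $\Phi_{s,t}:\mathbb{F}_q[x,y]_s\times\mathbb{F}_q[x,y]_t\to\mathbb{F}_q[x,y]_{s+t}$ is $(f,h)\mapsto fh$, and \[ S_{s,t}=\Big\{p\in\mathbb{F}_q[x,y]_{s+t}:\ \text{if } f\in\mathbb{F}_q[x]_{\le s}\text{ divides }p_x,\ \text{then }\deg\big(p_x/f\big)\ge t+1\Big\}. \] *)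

theory Defs
  imports "HOL-Computational_Algebra.Polynomial"
begin

text \<open>Bivariate polynomials in x,y over a field are represented as
  polynomials in y whose coefficients are polynomials in x:
  the monomial x^i y^j has coefficient  coeff (coeff P j) i.\<close>

type_synonym 'a bipoly = "'a poly poly"

definition bicoeff :: "'a::zero bipoly \<Rightarrow> nat \<Rightarrow> nat \<Rightarrow> 'a" where
  "bicoeff P i j = coeff (coeff P j) i"

definition homog :: "nat \<Rightarrow> 'a::zero bipoly set" where
  "homog s = {P. \<forall>i j. bicoeff P i j \<noteq> 0 \<longrightarrow> i + j = s}"

definition dehom :: "'a::comm_semiring_1 bipoly \<Rightarrow> 'a poly" where
  "dehom P = poly P 1"

definition Phi :: "nat \<Rightarrow> nat \<Rightarrow> 'a::comm_semiring_1 bipoly \<times> 'a bipoly \<Rightarrow> 'a bipoly" where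
  "Phi s t = (\<lambda>(f, h). f * h)"

definition S_set :: "nat \<Rightarrow> nat \<Rightarrow> 'a::field bipoly set" where
  "S_set s t = {p \<in> homog (s + t).
     \<forall>f :: 'a poly. degree f \<le> s \<and> f dvd dehom p \<longrightarrow> degree (dehom p div f) \<ge> t + 1}"

end

theory Submission
  imports Defs
begin

text \<open>Dehomogenization is a bijection from \<open>F[x,y]\<^sub>n\<close> onto \<open>F[x]\<^sub>\<le>\<^sub>n\<close> which is
  multiplicative, with inverse the degree-\<open>n\<close> homogenization. Hence \<open>p \<in> F[x,y]\<^sub>s\<^sub>+\<^sub>t\<close>
  lies in the image of \<open>\<Phi>\<^sub>s\<^sub>,\<^sub>t\<close> iff \<open>p\<^sub>x = f g\<close> with \<open>deg f \<le> s\<close> and \<open>deg g \<le> t\<close>, and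
  over a field this says exactly that some divisor \<open>f\<close> of \<open>p\<^sub>x\<close> of degree at most \<open>s\<close>
  leaves a cofactor \<open>p\<^sub>x / f\<close> of degree at most \<open>t\<close>: the negation of the condition
  defining \<open>S\<^sub>s\<^sub>,\<^sub>t\<close>.\<close>

definition homogenize :: "nat \<Rightarrow> 'a::comm_semiring_1 poly \<Rightarrow> 'a bipoly" where
  "homogenize n q = (\<Sum>i\<le>n. monom (monom (coeff q i) i) (n - i))"

lemma bipoly_eqI: "(\<And>i j. bicoeff P i j = bicoeff Q i j) \<Longrightarrow> P = Q"
  unfolding bicoeff_def by (simp add: poly_eq_iff)

lemma homog_bicoeff_eq_0: "P \<in> homog n \<Longrightarrow> i + j \<noteq> n \<Longrightarrow> bicoeff P i j = 0"
  unfolding homog_def by blast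

lemma coeff_homogenize:
  "coeff (homogenize n q) j = (if j \<le> n then monom (coeff q (n - j)) (n - j) else 0)"
proof -
  have "coeff (homogenize n q) j = (\<Sum>i\<le>n. if i = n - j \<and> j \<le> n then monom (coeff q i) i else 0)"
    unfolding homogenize_def coeff_sum coeff_monom by (intro sum.cong) auto
  then show ?thesis by (simp add: sum.delta)
qed

lemma bicoeff_homogenize:
  "bicoeff (homogenize n q) i j = (if i + j = n then coeff q i else 0)"
  by (auto simp: bicoeff_def coeff_homogenize coeff_monom)

lemma homogenize_in_homog: "homogenize n q \<in> homog n"
  unfolding homog_def by (simp add: bicoeff_homogenize)

lemma dehom_homogenize: "degree q \<le> n \<Longrightarrow> dehom (homogenize n q) = q"
  unfolding dehom_def homogenize_def poly_sum poly_monom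
  using poly_as_sum_of_monoms' by simp

lemma dehom_mult: "dehom (P * Q) = dehom P * dehom Q"
  unfolding dehom_def by simp

lemma coeff_dehom: "coeff (dehom P) i = (\<Sum>j\<le>degree P. bicoeff P i j)"
  by (simp add: dehom_def poly_altdef coeff_sum bicoeff_def)

lemma coeff_dehom_homog:
  assumes "P \<in> homog n"
  shows "coeff (dehom P) i = (if i \<le> n then bicoeff P i (n - i) else 0)"
proof -
  have "coeff (dehom P) i = (\<Sum>j\<le>degree P. if j = n - i \<and> i \<le> n then bicoeff P i j else 0)"
    unfolding coeff_dehom using homog_bicoeff_eq_0[OF assms] by (intro sum.cong) auto
  then show ?thesis by (simp add: sum.delta bicoeff_def coeff_eq_0)
qed

lemma degree_dehom_homog: "P \<in> homog n \<Longrightarrow> degree (dehom P) \<le> n"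
  by (rule degree_le) (simp add: coeff_dehom_homog)

lemma homogenize_dehom: "P \<in> homog n \<Longrightarrow> homogenize n (dehom P) = P"
  by (rule bipoly_eqI) (auto simp: bicoeff_homogenize coeff_dehom_homog homog_bicoeff_eq_0)

lemma homog_mult:
  assumes "P \<in> homog s" and "Q \<in> homog t"
  shows "P * Q \<in> homog (s + t)"
  unfolding homog_def
proof (intro CollectI allI impI)
  fix i k
  assume "bicoeff (P * Q) i k \<noteq> 0"
  moreover have "bicoeff (P * Q) i k
      = (\<Sum>j\<le>k. \<Sum>a\<le>i. bicoeff P a j * bicoeff Q (i - a) (k - j))"
    by (simp add: bicoeff_def coeff_mult coeff_sum)
  ultimately obtain j a where "j \<le> k" "a \<le> i"
    and "bicoeff P a j \<noteq> 0" "bicoeff Q (i - a) (k - j) \<noteq> 0"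
    by (metis (no_types, lifting) atMost_iff mult_not_zero sum.neutral)
  then show "i + k = s + t"
    using homog_bicoeff_eq_0[OF assms(1), of a j] homog_bicoeff_eq_0[OF assms(2), of "i - a" "k - j"]
    by linarith
qed

lemma homogenize_mult:
  assumes "degree f \<le> s" and "degree g \<le> t"
  shows "homogenize s f * homogenize t g = homogenize (s + t) (f * g)"
proof -
  have "homogenize s f * homogenize t g \<in> homog (s + t)"
    by (intro homog_mult homogenize_in_homog)
  from homogenize_dehom[OF this] show ?thesis
    by (simp add: dehom_mult dehom_homogenize assms)
qed

lemma image_Phi_eq:
  "Phi s t ` (homog s \<times> homog t) =
     {p \<in> homog (s + t). \<exists>f g. degree f \<le> s \<and> degree g \<le> t \<and> dehom p = f * g}"
proof (intro equalityI subsetI)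
  fix p assume "p \<in> Phi s t ` (homog s \<times> homog t)"
  then obtain P Q where "P \<in> homog s" "Q \<in> homog t" "p = P * Q"
    unfolding Phi_def by auto
  then show "p \<in> {p \<in> homog (s + t). \<exists>f g. degree f \<le> s \<and> degree g \<le> t \<and> dehom p = f * g}"
    by (auto simp: homog_mult dehom_mult intro!: degree_dehom_homog)
next
  fix p assume "p \<in> {p \<in> homog (s + t). \<exists>f g. degree f \<le> s \<and> degree g \<le> t \<and> dehom p = f * g}"
  then obtain f g where p: "p \<in> homog (s + t)" and fg: "degree f \<le> s" "degree g \<le> t"
    and "dehom p = f * g" by blast
  then have "p = homogenize (s + t) (f * g)"
    using homogenize_dehom[OF p] by simp
  then have "p = Phi s t (homogenize s f, homogenize t g)"
    unfolding Phi_def by (simp add: homogenize_mult[OF fg])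
  then show "p \<in> Phi s t ` (homog s \<times> homog t)"
    by (simp add: homogenize_in_homog)
qed

lemma ex_bounded_factorization_iff_dvd:
  fixes q :: "'a::field poly"
  shows "(\<exists>f g. degree f \<le> s \<and> degree g \<le> t \<and> q = f * g) \<longleftrightarrow>
         (\<exists>f. degree f \<le> s \<and> f dvd q \<and> degree (q div f) \<le> t)"
proof
  assume "\<exists>f g. degree f \<le> s \<and> degree g \<le> t \<and> q = f * g"
  then obtain f g where "degree f \<le> s" "degree g \<le> t" "q = f * g" by blast
  moreover from this have "f dvd q \<and> degree (q div f) \<le> t"
    by (cases "f = 0") auto
  ultimately show "\<exists>f. degree f \<le> s \<and> f dvd q \<and> degree (q div f) \<le> t" by blast
next
  assume "\<exists>f. degree f \<le> s \<and> f dvd q \<and> degree (q div f) \<le> t"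
  then obtain f where "degree f \<le> s" "f dvd q" "degree (q div f) \<le> t" by blast
  then show "\<exists>f g. degree f \<le> s \<and> degree g \<le> t \<and> q = f * g"
    by (intro exI[of _ f] exI[of _ "q div f"]) simp
qed

theorem lemma3p16:
  fixes s t :: nat
  assumes "0 < s" and "s \<le> t"
  shows "(S_set s t :: ('a::{field,finite}) bipoly set)
           = homog (s + t) - Phi s t ` (homog s \<times> homog t)"
proof -
  have "p \<notin> S_set s t \<longleftrightarrow> p \<in> Phi s t ` (homog s \<times> homog t)"
    if "p \<in> homog (s + t)" for p :: "'a bipoly"
    using that unfolding image_Phi_eq S_set_def ex_bounded_factorization_iff_dvd
    by (auto simp: not_less_eq_eq)
  moreover have "S_set s t \<subseteq> (homog (s + t) :: 'a bipoly set)"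
    unfolding S_set_def by blast
  ultimately show ?thesis by blast
qed

end
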